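(* Let $D>0$ be a square-free integer, let $p$ be an odd prime with $\left(\frac{-D}{p}\right)=1$, and let $\alpha\ge 1$ be an integer. Let $x_0,y_0$ be integers with $\gcd(x_0,y_0)=1$ and $x_0^2+Dy_0^2=p^{2\alpha}$. Suppose $c,d$ are integers with $\gcd(c,d)=1$ and $p^{2\alpha}\mid c^2+Dd^2$. Then exactly one of the following holds in $\mathbb{Z}[\sqrt{-D}]$: $x_0+y_0\sqrt{-D}\mid c+d\sqrt{-D}$, or $x_0-y_0\sqrt{-D}\mid c+d\sqrt{-D}$.
   Context: $\left(\frac{\cdot}{p}\right)$ is the Legendre symbol. *)

theory Defs
  imports "HOL-Number_Theory.Number_Theory" "HOL-Computational_Algebra.Squarefree"
begin

text \<open>Divisibility in the ring Z[sqrt(-D)]: the element x + y sqrt(-D) divides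
  c + d sqrt(-D) iff there is u + v sqrt(-D) in Z[sqrt(-D)] with
  (x + y sqrt(-D)) (u + v sqrt(-D)) = c + d sqrt(-D), i.e.
  c = x u - D y v and d = x v + y u.\<close>
definition zsqrt_dvd :: "int \<Rightarrow> int \<Rightarrow> int \<Rightarrow> int \<Rightarrow> int \<Rightarrow> bool" where
  "zsqrt_dvd D x y c d \<longleftrightarrow> (\<exists>u v. c = x * u - D * y * v \<and> d = x * v + y * u)"

end

theory Submission
  imports Defs
begin

text \<open>Write N = x0^2 + D y0^2 = p^(2 alpha). Divisibility of c + d sqrt(-D) by x0 +- y0 sqrt(-D)
  amounts to N dividing d x0 -+ c y0. The product of these two integers is
  d^2 N - y0^2 (c^2 + D d^2), a multiple of N, while their sum 2 d x0 is prime to p.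
  Hence the full power of p divides exactly one of them.\<close>

lemma zsqrt_dvd_iff_dvd_cross:
  fixes D x y c d :: int
  assumes nonzero: "x^2 + D*y^2 \<noteq> 0" and coprime: "coprime (x^2 + D*y^2) y"
  shows "zsqrt_dvd D x y c d \<longleftrightarrow> x^2 + D*y^2 dvd d*x - c*y"
proof
  assume "zsqrt_dvd D x y c d"
  then obtain u v where "c = x*u - D*y*v" "d = x*v + y*u"
    unfolding zsqrt_dvd_def by blast
  then have "d*x - c*y = (x*v + y*u)*x - (x*u - D*y*v)*y" by simp
  also have "\<dots> = (x^2 + D*y^2) * v" by (simp add: algebra_simps power2_eq_square)
  finally show "x^2 + D*y^2 dvd d*x - c*y" by simp
next
  define N where "N = x^2 + D*y^2"
  assume "x^2 + D*y^2 dvd d*x - c*y"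
  then obtain v where v: "d*x - c*y = N*v" unfolding N_def by (auto elim: dvdE)
  \<comment> \<open>The quotient is ((c x + D d y) + (d x - c y) sqrt(-D)) / N; its first coordinate is
    integral since y (c x + D d y) = d N - x (d x - c y) and N is coprime to y.\<close>
  have "y*(c*x + D*d*y) = d*N - x*(d*x - c*y)"
    by (simp add: N_def algebra_simps power2_eq_square)
  also have "\<dots> = N*(d - x*v)" using v by (simp add: algebra_simps)
  finally have "y*(c*x + D*d*y) = N*(d - x*v)" .
  then have "N dvd c*x + D*d*y"
    using coprime by (metis N_def coprime_dvd_mult_right_iff dvd_triv_left)
  then obtain u where u: "c*x + D*d*y = N*u" by (auto elim: dvdE)
  have "N*(x*u - D*y*v) = x*(c*x + D*d*y) - D*y*(d*x - c*y)"
    using u v by (simp add: algebra_simps)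
  also have "\<dots> = N*c" by (simp add: N_def algebra_simps power2_eq_square)
  finally have c_eq: "c = x*u - D*y*v" using nonzero N_def by simp
  have "N*(x*v + y*u) = x*(d*x - c*y) + y*(c*x + D*d*y)"
    using u v by (simp add: algebra_simps)
  also have "\<dots> = N*d" by (simp add: N_def algebra_simps power2_eq_square)
  finally have "d = x*v + y*u" using nonzero N_def by simp
  with c_eq show "zsqrt_dvd D x y c d" unfolding zsqrt_dvd_def by blast
qed

lemma Legendre_eq_1_imp_not_dvd:
  assumes "Legendre a p = 1"
  shows "\<not> p dvd a"
  using assms by (auto simp: Legendre_def cong_0_iff)

lemma prime_dvd_norm_coprime_not_dvd_snd:
  fixes p x y D :: int
  assumes "prime p" and "coprime x y" and "p dvd x^2 + D*y^2"
  shows "\<not> p dvd y"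
proof
  assume "p dvd y"
  then have "p dvd D*y^2" by (simp add: power2_eq_square)
  then have "p dvd x^2" using assms(3) by (simp add: dvd_add_left_iff)
  then have "p dvd x" by (rule prime_dvd_power[OF assms(1)])
  with \<open>p dvd y\<close> show False
    using assms(1,2) by (metis coprime_common_divisor not_prime_unit)
qed

lemma prime_dvd_norm_coprime_not_dvd_fst:
  fixes p x y D :: int
  assumes "prime p" and "coprime x y" and "p dvd x^2 + D*y^2" and "\<not> p dvd D"
  shows "\<not> p dvd x"
proof
  assume "p dvd x"
  then have "p dvd x^2" by (simp add: power2_eq_square)
  then have "p dvd D*y^2" using assms(3) by (simp add: dvd_add_right_iff)
  then have "p dvd y"
    using assms(1,4) by (metis prime_dvd_mult_iff prime_dvd_power)
  with assms(1-3) show False by (metis prime_dvd_norm_coprime_not_dvd_snd)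
qed

lemma odd_prime_int_not_dvd_two:
  fixes p :: int
  assumes "prime p" and "odd p"
  shows "\<not> p dvd 2"
proof
  assume "p dvd 2"
  then have "p \<le> 2" by (simp add: zdvd_imp_le)
  with prime_ge_2_int[OF assms(1)] \<open>odd p\<close> show False by simp
qed

lemma norm_dvd_cross_product:
  fixes D x y c d N :: int
  assumes "x^2 + D*y^2 = N" and "N dvd c^2 + D*d^2"
  shows "N dvd (d*x - c*y) * (d*x + c*y)"
proof -
  have "(d*x - c*y) * (d*x + c*y) = d^2 * N - y^2 * (c^2 + D*d^2)"
    using assms(1)[symmetric] by (simp add: algebra_simps power2_eq_square)
  then show ?thesis using assms(2) by simp
qed

lemma prime_power_dvd_mult_exactly_one:
  fixes p a b :: "'a :: algebraic_semidom"
  assumes p: "prime_elem p" and "n > 0" and "p^n dvd a*b" and "\<not> (p dvd a \<and> p dvd b)"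
  shows "(p^n dvd a \<or> p^n dvd b) \<and> \<not> (p^n dvd a \<and> p^n dvd b)"
proof
  have "p^n dvd b*a" using assms(3) by (simp add: mult.commute)
  then show "p^n dvd a \<or> p^n dvd b"
    using assms(4) prime_power_dvd_multD[OF p assms(3) \<open>n > 0\<close>]
      prime_power_dvd_multD[OF p _ \<open>n > 0\<close>] by blast
  have "p dvd p^n" using \<open>n > 0\<close> by (simp add: dvd_power)
  then show "\<not> (p^n dvd a \<and> p^n dvd b)"
    using assms(4) dvd_trans by blast
qed

theorem lemma3p4:
  fixes D p x0 y0 c d :: int and \<alpha> :: nat
  assumes "D > 0" and "squarefree D"
    and "prime p" and "odd p" and "Legendre (- D) p = 1"
    and "\<alpha> \<ge> 1"
    and "gcd x0 y0 = 1" and "x0^2 + D * y0^2 = p^(2*\<alpha>)"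
    and "gcd c d = 1" and "p^(2*\<alpha>) dvd c^2 + D * d^2"
  shows "(zsqrt_dvd D x0 y0 c d \<or> zsqrt_dvd D x0 (- y0) c d)
         \<and> \<not> (zsqrt_dvd D x0 y0 c d \<and> zsqrt_dvd D x0 (- y0) c d)"
proof -
  note p = \<open>prime p\<close>
  have "p dvd p^(2*\<alpha>)" using \<open>\<alpha> \<ge> 1\<close> by (simp add: dvd_power)
  then have p_dvd_norms: "p dvd x0^2 + D*y0^2" "p dvd c^2 + D*d^2"
    using assms(8,10) dvd_trans by auto
  have "\<not> p dvd D" using Legendre_eq_1_imp_not_dvd[OF assms(5)] by simp
  then have "\<not> p dvd x0" "\<not> p dvd y0" "\<not> p dvd d"
    using p assms(7,9) p_dvd_norms
    by (auto dest: prime_dvd_norm_coprime_not_dvd_fst prime_dvd_norm_coprime_not_dvd_snd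
        simp: coprime_iff_gcd_eq_1)
  then have "\<not> p dvd (d*x0 - c*y0) + (d*x0 + c*y0)"
    using p odd_prime_int_not_dvd_two[OF p \<open>odd p\<close>] by (simp add: prime_dvd_mult_iff)
  then have not_both: "\<not> (p dvd d*x0 - c*y0 \<and> p dvd d*x0 + c*y0)"
    by (metis dvd_add)
  have "coprime (p^(2*\<alpha>)) y0"
    using p \<open>\<not> p dvd y0\<close> by (simp add: prime_imp_coprime)
  then have "zsqrt_dvd D x0 y0 c d \<longleftrightarrow> p^(2*\<alpha>) dvd d*x0 - c*y0"
    "zsqrt_dvd D x0 (- y0) c d \<longleftrightarrow> p^(2*\<alpha>) dvd d*x0 + c*y0"
    using zsqrt_dvd_iff_dvd_cross[of x0 D y0 c d] zsqrt_dvd_iff_dvd_cross[of x0 D "- y0" c d]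
      assms(8) p by auto
  then show ?thesis
    using prime_power_dvd_mult_exactly_one[OF prime_imp_prime_elem[OF p] _
        norm_dvd_cross_product[OF assms(8,10)] not_both] \<open>\<alpha> \<ge> 1\<close>
    by simp
qed

end
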